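(* Given any finite collection of Jordan blocks $J_1,\dots,J_k$, where $J_i$ has eigenvalue $\lambda_i\in\mathbb C$ and size $d_i\ge1$, there exists a purely competitive real matrix $B$ whose Jordan decomposition contains this multiset of Jordan blocks.
   Context: A square real matrix $B$ is purely competitive if $B_{ij}\le0$ for all $i\ne j$ and $B_{ii}=0$ for all $i$. *)

theory Defs
  imports "Jordan_Normal_Form.Jordan_Normal_Form"
begin

definition purely_competitive :: "real mat \<Rightarrow> bool" where
  "purely_competitive B \<longleftrightarrow> dim_row B = dim_col B \<and>
     (\<forall>i < dim_row B. \<forall>j < dim_col B. i \<noteq> j \<longrightarrow> B $$ (i, j) \<le> 0) \<and>
     (\<forall>i < dim_row B. B $$ (i, i) = 0)"

end

theory Submission
  imports Defs
begin

text \<open>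
  Each Jordan block is realised by its own purely competitive matrix, and these are assembled
  block-diagonally. For a block J_d(c), let \<omega> be a primitive cube root of unity. Since
  1 + \<omega> + \<omega>^2 = 0, we can write c = x + y \<omega> + z \<omega>^2 with x, y, z \<ge> 0. The circulant C
  with first row (x, y, z) is diagonalised by the 3 \<times> 3 Fourier matrix, with eigenvalues
  x + y \<omega>^k + z \<omega>^(2k), so the nonnegative matrix M = C \<otimes> I_d + I_3 \<otimes> J_d(0) has the Jordan
  blocks J_d(x + y \<omega>^k + z \<omega>^(2k)), among them J_d(c). Finally K \<otimes> M = [[0, -M], [-M, 0]]
  with K = [[0, -1], [-1, 0]] has zero diagonal and nonpositive entries, and it is similar to
  diag(M, -M) because K is similar to diag(1, -1).
\<close>

lemma sum_lessThan_mult_nat: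
  "(\<Sum>t < k * n. f t) = (\<Sum>a < k. \<Sum>j < n. f (a * n + j :: nat))"
proof -
  have "(\<Sum>j < n. f (a * n + j)) = sum f {a * n..<a * n + n}" for a
    using sum.shift_bounds_nat_ivl[of f 0 "a * n" n] by (simp add: atLeast0LessThan add.commute)
  then show ?thesis by (simp add: sum.nat_group)
qed

definition kron_mat :: "'a :: times mat \<Rightarrow> 'a mat \<Rightarrow> 'a mat" where
  "kron_mat A B = mat (dim_row A * dim_row B) (dim_col A * dim_col B)
     (\<lambda>(i, j). A $$ (i div dim_row B, j div dim_col B) * B $$ (i mod dim_row B, j mod dim_col B))"

lemma kron_mat_dim [simp]:
  "dim_row (kron_mat A B) = dim_row A * dim_row B"
  "dim_col (kron_mat A B) = dim_col A * dim_col B"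
  by (simp_all add: kron_mat_def)

lemma kron_mat_carrier [simp]:
  "A \<in> carrier_mat m k \<Longrightarrow> B \<in> carrier_mat n p \<Longrightarrow> kron_mat A B \<in> carrier_mat (m * n) (k * p)"
  by auto

lemma index_kron_mat:
  assumes "A \<in> carrier_mat m k" "B \<in> carrier_mat n p" "i < m * n" "j < k * p"
  shows "kron_mat A B $$ (i, j) = A $$ (i div n, j div p) * B $$ (i mod n, j mod p)"
  using assms by (simp add: kron_mat_def)

lemma kron_mat_mult:
  fixes A :: "'a :: comm_semiring_0 mat"
  assumes A: "A \<in> carrier_mat m k" and A': "A' \<in> carrier_mat k l"
    and B: "B \<in> carrier_mat n p" and B': "B' \<in> carrier_mat p q"
  shows "kron_mat A B * kron_mat A' B' = kron_mat (A * A') (B * B')"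
proof (rule eq_matI)
  fix i j assume "i < dim_row (kron_mat (A * A') (B * B'))" "j < dim_col (kron_mat (A * A') (B * B'))"
  with A A' B B' have i: "i < m * n" and j: "j < l * q" by auto
  then have pos: "0 < n" "0 < q" by (auto intro!: gr0I)
  have "(kron_mat A B * kron_mat A' B') $$ (i, j) =
      (\<Sum>t < k * p. kron_mat A B $$ (i, t) * kron_mat A' B' $$ (t, j))"
    using i j A A' B B' by (simp add: scalar_prod_def atLeast0LessThan)
  also have "\<dots> = (\<Sum>a < k. \<Sum>b < p.
      (A $$ (i div n, a) * A' $$ (a, j div q)) * (B $$ (i mod n, b) * B' $$ (b, j mod q)))"
    unfolding sum_lessThan_mult_nat
  proof (intro sum.cong refl)
    fix a b assume a: "a \<in> {..<k}" and b: "b \<in> {..<p}"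
    have "Suc a * p \<le> k * p" using a by (intro mult_le_mono1) auto
    then have "a * p + b < k * p" using b by auto
    moreover have "(a * p + b) div p = a" "(a * p + b) mod p = b" using b by auto
    ultimately show "kron_mat A B $$ (i, a * p + b) * kron_mat A' B' $$ (a * p + b, j) =
        (A $$ (i div n, a) * A' $$ (a, j div q)) * (B $$ (i mod n, b) * B' $$ (b, j mod q))"
      using index_kron_mat[OF A B i] index_kron_mat[OF A' B' _ j] by (simp add: ac_simps)
  qed
  also have "\<dots> = (\<Sum>a < k. A $$ (i div n, a) * A' $$ (a, j div q)) *
      (\<Sum>b < p. B $$ (i mod n, b) * B' $$ (b, j mod q))"
    by (simp add: sum_product)
  also have "\<dots> = (A * A') $$ (i div n, j div q) * (B * B') $$ (i mod n, j mod q)"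
    using i j pos A A' B B' by (simp add: scalar_prod_def atLeast0LessThan less_mult_imp_div_less)
  also have "\<dots> = kron_mat (A * A') (B * B') $$ (i, j)"
    using index_kron_mat[OF mult_carrier_mat[OF A A'] mult_carrier_mat[OF B B'] i j] by simp
  finally show "(kron_mat A B * kron_mat A' B') $$ (i, j) = kron_mat (A * A') (B * B') $$ (i, j)" .
qed (use A A' B B' in auto)

lemma kron_mat_one [simp]: "kron_mat (1\<^sub>m m) (1\<^sub>m n) = (1\<^sub>m (m * n) :: 'a :: semiring_1 mat)"
proof (rule eq_matI)
  fix i j assume "i < dim_row (1\<^sub>m (m * n) :: 'a mat)" "j < dim_col (1\<^sub>m (m * n) :: 'a mat)"
  then have ij: "i < m * n" "j < m * n" by auto
  then have "0 < n" by (auto intro!: gr0I)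
  moreover have "i div n = j div n \<and> i mod n = j mod n \<longleftrightarrow> i = j"
    by (metis div_mult_mod_eq)
  ultimately show "kron_mat (1\<^sub>m m) (1\<^sub>m n) $$ (i, j) = (1\<^sub>m (m * n) :: 'a mat) $$ (i, j)"
    using ij by (auto simp: index_kron_mat[OF one_carrier_mat one_carrier_mat] less_mult_imp_div_less)
qed auto

lemma (in semiring_hom) mat_hom_kron_mat: "mat\<^sub>h (kron_mat A B) = kron_mat (mat\<^sub>h A) (mat\<^sub>h B)"
proof (rule eq_matI)
  fix i j assume ij: "i < dim_row (kron_mat (mat\<^sub>h A) (mat\<^sub>h B))" "j < dim_col (kron_mat (mat\<^sub>h A) (mat\<^sub>h B))"
  then have "0 < dim_row B" "0 < dim_col B" by (auto intro!: gr0I)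
  with ij show "mat\<^sub>h (kron_mat A B) $$ (i, j) = kron_mat (mat\<^sub>h A) (mat\<^sub>h B) $$ (i, j)"
    by (simp add: kron_mat_def hom_mult less_mult_imp_div_less)
qed auto

lemma (in semiring_hom) mat_hom_add:
  "A \<in> carrier_mat n m \<Longrightarrow> B \<in> carrier_mat n m \<Longrightarrow> mat\<^sub>h (A + B) = mat\<^sub>h A + mat\<^sub>h B"
  by (rule eq_matI) (auto simp: hom_add)

lemma (in semiring_hom) mat_hom_jordan_block: "mat\<^sub>h (jordan_block n a) = jordan_block n (hom a)"
  by (rule eq_matI) (auto simp: jordan_block_def)

lemma similar_mat_wit_kron_mat:
  fixes A :: "'a :: comm_semiring_1 mat"
  assumes AB: "similar_mat_wit A B P Q" and CD: "similar_mat_wit C D R S"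
  shows "similar_mat_wit (kron_mat A C) (kron_mat B D) (kron_mat P R) (kron_mat Q S)"
proof -
  obtain m where m: "{A, B, P, Q} \<subseteq> carrier_mat m m" "P * Q = 1\<^sub>m m" "Q * P = 1\<^sub>m m"
    and A: "A = P * B * Q"
    using similar_mat_witD[OF refl AB] by blast
  obtain n where n: "{C, D, R, S} \<subseteq> carrier_mat n n" "R * S = 1\<^sub>m n" "S * R = 1\<^sub>m n"
    and C: "C = R * D * S"
    using similar_mat_witD[OF refl CD] by blast
  have "kron_mat P R * kron_mat B D * kron_mat Q S = kron_mat (P * B) (R * D) * kron_mat Q S"
    using m n by (simp add: kron_mat_mult[of P m m B m R n n D n])
  also have "\<dots> = kron_mat A C"
    unfolding A C using m n by (intro kron_mat_mult) auto
  finally show ?thesis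
    using m n by (intro similar_mat_witI[of _ _ "m * n"]) (auto simp: kron_mat_mult)
qed

lemma similar_mat_kron_mat:
  fixes A :: "'a :: comm_semiring_1 mat"
  assumes "similar_mat A B" "similar_mat C D"
  shows "similar_mat (kron_mat A C) (kron_mat B D)"
  using assms similar_mat_wit_kron_mat unfolding similar_mat_def by blast

lemma similar_mat_wit_add:
  assumes "similar_mat_wit A B P Q" "similar_mat_wit A' B' P Q" "dim_row A' = dim_row A"
  shows "similar_mat_wit (A + A') (B + B') P Q"
proof -
  obtain n where n: "A \<in> carrier_mat n n" "B \<in> carrier_mat n n" "P \<in> carrier_mat n n"
    "Q \<in> carrier_mat n n" "P * Q = 1\<^sub>m n" "Q * P = 1\<^sub>m n" and A: "A = P * B * Q"
    using similar_mat_witD[OF refl assms(1)] by blast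
  have n': "{A', B'} \<subseteq> carrier_mat n n" and A': "A' = P * B' * Q"
    using similar_mat_witD[OF _ assms(2), of n] assms(3) n(1) by auto
  have PB: "P * B \<in> carrier_mat n n" "P * B' \<in> carrier_mat n n"
    using n n' by (auto intro: mult_carrier_mat)
  have "P * (B + B') * Q = (P * B + P * B') * Q"
    using n n' by (simp add: mult_add_distrib_mat[of P n n B n B'])
  also have "\<dots> = A + A'"
    using n PB by (simp add: add_mult_distrib_mat[OF PB n(4)] A A')
  finally show ?thesis
    using n n' by (intro similar_mat_witI[OF n(5,6)]) auto
qed

lemma similar_mat_wit_one:
  assumes "P * Q = 1\<^sub>m n" "Q * P = 1\<^sub>m n" "P \<in> carrier_mat n n" "Q \<in> carrier_mat n n"
  shows "similar_mat_wit (1\<^sub>m n) (1\<^sub>m n) P Q"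
  by (rule similar_mat_witI[OF assms(1,2)]) (use assms in auto)

lemma jordan_matrix_append:
  "jordan_matrix (as @ bs) = four_block_mat (jordan_matrix as)
     (0\<^sub>m (sum_list (map fst as)) (sum_list (map fst bs)))
     (0\<^sub>m (sum_list (map fst bs)) (sum_list (map fst as))) (jordan_matrix bs)"
  unfolding jordan_matrix_def map_append diag_block_mat_append Let_def
  by (simp only: jordan_matrix_dim[unfolded jordan_matrix_def])

lemma jordan_nf_dim:
  assumes "jordan_nf A as" "A \<in> carrier_mat n n"
  shows "sum_list (map fst as) = n"
proof -
  obtain k P Q where "{A, jordan_matrix as, P, Q} \<subseteq> carrier_mat k k"
    using similar_matD[of A "jordan_matrix as"] assms(1) unfolding jordan_nf_def by blast
  then have "dim_row (jordan_matrix as) = dim_row A" by auto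
  with assms(2) show ?thesis by simp
qed

lemma jordan_nf_four_block_0_0:
  assumes "jordan_nf A as" "jordan_nf B bs" "A \<in> carrier_mat n n" "B \<in> carrier_mat m m"
  shows "jordan_nf (four_block_mat A (0\<^sub>m n m) (0\<^sub>m m n) B) (as @ bs)"
  using assms similar_mat_four_block_0_0[of A "jordan_matrix as" B "jordan_matrix bs" n m]
  unfolding jordan_nf_def jordan_matrix_append jordan_nf_dim[OF assms(1,3)] jordan_nf_dim[OF assms(2,4)]
  by auto

definition jordan_inflate :: "'a :: semiring_1 mat \<Rightarrow> nat \<Rightarrow> 'a mat" where
  "jordan_inflate A d = kron_mat A (1\<^sub>m d) + kron_mat (1\<^sub>m (dim_row A)) (jordan_block d 0)"

lemma jordan_inflate_dim [simp]:
  "dim_row (jordan_inflate A d) = dim_row A * d" "dim_col (jordan_inflate A d) = dim_row A * d"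
  by (simp_all add: jordan_inflate_def)

lemma index_jordan_inflate:
  assumes "A \<in> carrier_mat k k" "i < k * d" "j < k * d"
  shows "jordan_inflate A d $$ (i, j) = A $$ (i div d, j div d) * 1\<^sub>m d $$ (i mod d, j mod d)
    + 1\<^sub>m k $$ (i div d, j div d) * jordan_block d 0 $$ (i mod d, j mod d)"
  using assms by (simp add: jordan_inflate_def index_kron_mat[OF _ one_carrier_mat]
      index_kron_mat[OF one_carrier_mat jordan_block_carrier])

lemma (in semiring_hom) mat_hom_jordan_inflate:
  "A \<in> carrier_mat k k \<Longrightarrow> mat\<^sub>h (jordan_inflate A d) = jordan_inflate (mat\<^sub>h A) d"
  unfolding jordan_inflate_def
  by (simp add: mat_hom_add[of _ "k * d" "k * d"] mat_hom_kron_mat mat_hom_one mat_hom_jordan_block)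

lemma similar_mat_jordan_inflate:
  fixes A :: "'a :: comm_semiring_1 mat"
  assumes "similar_mat A B" "A \<in> carrier_mat k k"
  shows "similar_mat (jordan_inflate A d) (jordan_inflate B d)"
proof -
  obtain P Q where PQ: "similar_mat_wit A B P Q"
    using assms(1) unfolding similar_mat_def by blast
  note carriers = similar_mat_witD2[OF assms(2) PQ]
  then have "similar_mat_wit (1\<^sub>m k) (1\<^sub>m k) P Q"
    by (intro similar_mat_wit_one) auto
  then have "similar_mat_wit (jordan_inflate A d) (jordan_inflate B d)
      (kron_mat P (1\<^sub>m d)) (kron_mat Q (1\<^sub>m d))"
    unfolding jordan_inflate_def using assms(2) carriers
      similar_mat_wit_kron_mat[OF PQ similar_mat_wit_refl[OF one_carrier_mat]]
      similar_mat_wit_kron_mat[OF _ similar_mat_wit_refl[OF jordan_block_carrier]]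
    by (intro similar_mat_wit_add) auto
  then show ?thesis unfolding similar_mat_def by blast
qed

lemma index_jordan_matrix_same_size:
  assumes "0 < d" "i < length as * d" "j < length as * d"
  shows "jordan_matrix (map (\<lambda>a. (d, a)) as) $$ (i, j) =
    (if i div d = j div d then jordan_block d (as ! (i div d)) $$ (i mod d, j mod d) else 0)"
  using assms(2,3)
proof (induction as arbitrary: i j)
  case (Cons a as)
  have jm: "jordan_matrix (map (\<lambda>a. (d, a)) (a # as)) = four_block_mat (jordan_block d a)
      (0\<^sub>m d (length as * d)) (0\<^sub>m (length as * d) d) (jordan_matrix (map (\<lambda>a. (d, a)) as))"
    by (simp add: jordan_matrix_Cons o_def sum_list_triv)
  have shift: "k div d = Suc ((k - d) div d)" "k mod d = (k - d) mod d" if "d \<le> k" for k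
    using that \<open>0 < d\<close> by (simp_all add: le_div_geq le_mod_geq)
  have small: "k div d = 0" "k mod d = k" if "k < d" for k
    using that by simp_all
  show ?case
    using Cons.prems Cons.IH[of "i - d" "j - d"] shift[of i] shift[of j] small[of i] small[of j]
    unfolding jm by (auto simp: o_def sum_list_triv)
qed simp

lemma jordan_matrix_eq_jordan_inflate:
  "jordan_matrix (map (\<lambda>i. (d, f i)) [0..<k]) = jordan_inflate (mat_diag k f) (d :: nat)"
proof (rule eq_matI)
  fix i j assume "i < dim_row (jordan_inflate (mat_diag k f) d)" "j < dim_col (jordan_inflate (mat_diag k f) d)"
  then have ij: "i < k * d" "j < k * d" by (simp_all add: mat_diag_def)
  then have "0 < d" by (auto intro!: gr0I)
  moreover note index_jordan_inflate[OF mat_diag_dim[of k f] ij]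
  ultimately show "jordan_matrix (map (\<lambda>i. (d, f i)) [0..<k]) $$ (i, j) = jordan_inflate (mat_diag k f) d $$ (i, j)"
    using ij index_jordan_matrix_same_size[of d i "map f [0..<k]" j]
    by (auto simp: mat_diag_def less_mult_imp_div_less o_def)
qed (auto simp: o_def sum_list_triv mat_diag_def)

lemma jordan_nf_jordan_inflate:
  fixes A :: "'a :: comm_semiring_1 mat"
  assumes "similar_mat A (mat_diag k f)" "0 < d"
  shows "jordan_nf (jordan_inflate A d) (map (\<lambda>i. (d, f i)) [0..<k])"
proof -
  obtain n P Q where "{A, mat_diag k f, P, Q} \<subseteq> carrier_mat n n"
    using similar_matD[OF assms(1)] by blast
  then have "A \<in> carrier_mat k k" by (metis carrier_matD(1) insert_subset mat_diag_dim)
  then show ?thesis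
    using assms similar_mat_jordan_inflate[OF assms(1)]
    unfolding jordan_nf_def jordan_matrix_eq_jordan_inflate by auto
qed

definition nonneg_mat :: "'a :: {zero, ord} mat \<Rightarrow> bool" where
  "nonneg_mat A \<longleftrightarrow> (\<forall>i < dim_row A. \<forall>j < dim_col A. 0 \<le> A $$ (i, j))"

lemma nonneg_mat_jordan_inflate:
  fixes A :: "'a :: linordered_idom mat"
  assumes A: "nonneg_mat A" "A \<in> carrier_mat k k"
  shows "nonneg_mat (jordan_inflate A d)"
proof -
  have "0 \<le> jordan_inflate A d $$ (i, j)" if ij: "i < k * d" "j < k * d" for i j
  proof -
    have "0 < d" using ij by (auto intro!: gr0I)
    with ij A show ?thesis
      unfolding nonneg_mat_def by (auto simp: index_jordan_inflate[OF A(2) ij] less_mult_imp_div_less)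
  qed
  with A(2) show ?thesis by (auto simp: nonneg_mat_def)
qed

lemma purely_competitive_kron_mat:
  assumes K: "purely_competitive K" and M: "nonneg_mat M" "M \<in> carrier_mat n n"
  shows "purely_competitive (kron_mat K M)"
proof -
  define k where "k = dim_row K"
  have K_carrier: "K \<in> carrier_mat k k"
    and K_entries: "\<And>a b. a < k \<Longrightarrow> b < k \<Longrightarrow> a \<noteq> b \<Longrightarrow> K $$ (a, b) \<le> 0"
      "\<And>a. a < k \<Longrightarrow> K $$ (a, a) = 0"
    using K unfolding purely_competitive_def k_def by auto
  have entry: "kron_mat K M $$ (i, j) = K $$ (i div n, j div n) * M $$ (i mod n, j mod n)"
    and bounds: "i div n < k" "j div n < k" "0 \<le> M $$ (i mod n, j mod n)"
    if "i < k * n" "j < k * n" for i j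
  proof -
    have "0 < n" using that by (auto intro!: gr0I)
    then show "kron_mat K M $$ (i, j) = K $$ (i div n, j div n) * M $$ (i mod n, j mod n)"
      "i div n < k" "j div n < k" "0 \<le> M $$ (i mod n, j mod n)"
      using that M index_kron_mat[OF K_carrier M(2) that] unfolding nonneg_mat_def
      by (auto simp: less_mult_imp_div_less)
  qed
  have "kron_mat K M $$ (i, j) \<le> 0" if "i < k * n" "j < k * n" for i j
    using entry[OF that] bounds[OF that] K_entries
    by (cases "i div n = j div n") (auto intro: mult_nonpos_nonneg)
  moreover have "kron_mat K M $$ (i, i) = 0" if "i < k * n" for i
    using entry[OF that that] bounds[OF that that] K_entries by simp
  ultimately show ?thesis
    using K_carrier M(2) unfolding purely_competitive_def by auto
qed

lemma purely_competitive_four_block_0_0: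
  assumes "purely_competitive A" "purely_competitive B" "A \<in> carrier_mat n n" "B \<in> carrier_mat m m"
  shows "purely_competitive (four_block_mat A (0\<^sub>m n m) (0\<^sub>m m n) B)"
  using assms unfolding purely_competitive_def by auto

definition \<omega> :: complex where
  "\<omega> = Complex (-1/2) (sqrt 3 / 2)"

lemma omega_sum: "1 + \<omega> + \<omega>\<^sup>2 = 0"
  by (simp add: \<omega>_def power2_eq_square complex_eq_iff)

lemma omega_cube: "\<omega> ^ 3 = 1"
proof -
  have "\<omega> ^ 3 - 1 = (\<omega> - 1) * (1 + \<omega> + \<omega>\<^sup>2)"
    by (simp add: algebra_simps power2_eq_square power3_eq_cube)
  then show ?thesis by (simp add: omega_sum)
qed

lemma omega_power_reduce: "3 \<le> n \<Longrightarrow> \<omega> ^ n = \<omega> ^ (n - 3)"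
  using power_add[of \<omega> "n - 3" 3] by (simp add: omega_cube)

lemma omega_square: "\<omega> * \<omega> = - 1 - \<omega>" "\<omega>\<^sup>2 = - 1 - \<omega>" "\<omega> * (\<omega> * a) = - a - \<omega> * a"
proof -
  show sq: "\<omega> * \<omega> = - 1 - \<omega>"
    using omega_sum by (simp add: power2_eq_square eq_neg_iff_add_eq_0 algebra_simps)
  then show "\<omega>\<^sup>2 = - 1 - \<omega>"
    by (simp add: power2_eq_square)
  show "\<omega> * (\<omega> * a) = - a - \<omega> * a"
    unfolding mult.assoc[symmetric] sq by (simp add: algebra_simps)
qed

lemma nonneg_combination_omega:
  "\<exists>x y z. 0 \<le> x \<and> 0 \<le> y \<and> 0 \<le> z \<and> c = of_real x + of_real y * \<omega> + of_real z * \<omega>\<^sup>2"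
proof -
  define q where "q = 2 * Im c / sqrt 3"
  define p where "p = Re c + q / 2"
  define t where "t = \<bar>p\<bar> + \<bar>q\<bar>"
  have "c = of_real p + of_real q * \<omega>"
    by (simp add: complex_eq_iff p_def q_def \<omega>_def)
  also have "\<dots> = of_real (p + t) + of_real (q + t) * \<omega> + of_real t * \<omega>\<^sup>2"
    by (simp add: omega_square algebra_simps)
  finally show ?thesis
    by (intro exI[of _ "p + t"] exI[of _ "q + t"] exI[of _ t]) (auto simp: t_def)
qed

definition circulant3 :: "'a \<Rightarrow> 'a \<Rightarrow> 'a \<Rightarrow> 'a :: zero mat" where
  "circulant3 x y z = mat 3 3 (\<lambda>(i, j). if j = i then x else if j = (i + 1) mod 3 then y else z)"

definition fourier3 :: "complex mat" where
  "fourier3 = mat 3 3 (\<lambda>(i, j). \<omega> ^ (i * j))"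

definition inv_fourier3 :: "complex mat" where
  "inv_fourier3 = mat 3 3 (\<lambda>(i, j). \<omega> ^ (2 * i * j) / 3)"

lemma circulant3_carrier [simp]: "circulant3 x y z \<in> carrier_mat 3 3"
  by (simp add: circulant3_def)

lemma fourier3_carrier [simp]: "fourier3 \<in> carrier_mat 3 3" "inv_fourier3 \<in> carrier_mat 3 3"
  by (simp_all add: fourier3_def inv_fourier3_def)

lemma less_3_cases: "(i :: nat) < 3 \<Longrightarrow> i = 0 \<or> i = 1 \<or> i = 2"
  by auto

lemma sum_atLeast0LessThan_3: "(\<Sum>i = 0..<3. f i) = f 0 + f 1 + f (2 :: nat)"
  by (simp add: numeral_3_eq_3 numeral_2_eq_2)

lemma fourier3_inverse: "fourier3 * inv_fourier3 = 1\<^sub>m 3" "inv_fourier3 * fourier3 = 1\<^sub>m 3"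
  by (rule eq_matI; auto simp: scalar_prod_def sum_atLeast0LessThan_3 fourier3_def inv_fourier3_def
      omega_power_reduce omega_square field_simps dest!: less_3_cases)+

lemma circulant3_mult_fourier3:
  "circulant3 x y z * fourier3 = fourier3 * mat_diag 3 (\<lambda>k. x + y * \<omega> ^ k + z * \<omega> ^ (2 * k))"
  by (rule eq_matI; auto simp: scalar_prod_def sum_atLeast0LessThan_3 circulant3_def fourier3_def
      mat_diag_def omega_power_reduce omega_square algebra_simps dest!: less_3_cases)

lemma similar_mat_circulant3:
  "similar_mat (circulant3 x y z) (mat_diag 3 (\<lambda>k. x + y * \<omega> ^ k + z * \<omega> ^ (2 * k)))"
proof (rule similar_matI[of _ _ fourier3 inv_fourier3 3])
  let ?D = "mat_diag 3 (\<lambda>k. x + y * \<omega> ^ k + z * \<omega> ^ (2 * k))"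
  have "circulant3 x y z = circulant3 x y z * (fourier3 * inv_fourier3)"
    by (simp add: fourier3_inverse right_mult_one_mat[of _ 3 3])
  also have "\<dots> = fourier3 * ?D * inv_fourier3"
    by (simp add: assoc_mult_mat[of _ 3 3 _ 3 _ 3, symmetric] circulant3_mult_fourier3)
  finally show "circulant3 x y z = fourier3 * ?D * inv_fourier3" .
qed (auto simp: fourier3_inverse)

lemma nonneg_mat_circulant3: "0 \<le> x \<Longrightarrow> 0 \<le> y \<Longrightarrow> 0 \<le> z \<Longrightarrow> nonneg_mat (circulant3 x y z)"
  by (simp add: nonneg_mat_def circulant3_def)

lemma (in semiring_hom) mat_hom_circulant3: "mat\<^sub>h (circulant3 x y z) = circulant3 (hom x) (hom y) (hom z)"
  by (rule eq_matI) (auto simp: circulant3_def)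

definition neg_exchange_mat :: "'a :: ring_1 mat" where
  "neg_exchange_mat = mat 2 2 (\<lambda>(i, j). if i = j then 0 else -1)"

definition sign_diag_mat :: "'a :: ring_1 mat" where
  "sign_diag_mat = mat_diag 2 (\<lambda>i. if i = 0 then 1 else -1)"

lemma purely_competitive_neg_exchange_mat: "purely_competitive neg_exchange_mat"
  by (simp add: purely_competitive_def neg_exchange_mat_def)

lemma (in ring_hom) mat_hom_neg_exchange_mat: "mat\<^sub>h neg_exchange_mat = neg_exchange_mat"
  by (rule eq_matI) (auto simp: neg_exchange_mat_def hom_uminus)

lemma less_2_cases: "(i :: nat) < 2 \<Longrightarrow> i = 0 \<or> i = 1"
  by auto

lemma sum_atLeast0LessThan_2: "(\<Sum>i = 0..<2. f i) = f 0 + f (1 :: nat)"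
  by (simp add: numeral_2_eq_2)

lemma similar_mat_neg_exchange_mat:
  "similar_mat (neg_exchange_mat :: 'a :: field_char_0 mat) sign_diag_mat"
proof (rule similar_matI)
  let ?P = "mat 2 2 (\<lambda>(i, j). if i = 1 \<and> j = 0 then -1 else 1) :: 'a mat"
  let ?Q = "mat 2 2 (\<lambda>(i, j). (if i = 0 \<and> j = 1 then -1 else 1) / 2) :: 'a mat"
  show "?P * ?Q = 1\<^sub>m 2" "?Q * ?P = 1\<^sub>m 2" "neg_exchange_mat = ?P * sign_diag_mat * ?Q"
    by (rule eq_matI; auto simp: scalar_prod_def sum_atLeast0LessThan_2 neg_exchange_mat_def
        sign_diag_mat_def mat_diag_def dest!: less_2_cases)+
  show "{neg_exchange_mat, sign_diag_mat, ?P, ?Q} \<subseteq> carrier_mat 2 2"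
    by (auto simp: neg_exchange_mat_def sign_diag_mat_def)
qed

lemma kron_mat_sign_diag_mat:
  fixes M :: "'a :: ring_1 mat"
  assumes M: "M \<in> carrier_mat n n"
  shows "kron_mat sign_diag_mat M = four_block_mat M (0\<^sub>m n n) (0\<^sub>m n n) ((-1) \<cdot>\<^sub>m M)"
proof (rule eq_matI)
  fix i j assume "i < dim_row (four_block_mat M (0\<^sub>m n n) (0\<^sub>m n n) ((-1) \<cdot>\<^sub>m M))"
    "j < dim_col (four_block_mat M (0\<^sub>m n n) (0\<^sub>m n n) ((-1) \<cdot>\<^sub>m M))"
  then have ij: "i < 2 * n" "j < 2 * n" using M by auto
  have halves: "k < n \<and> k div n = 0 \<and> k mod n = k \<or> n \<le> k \<and> k div n = 1 \<and> k mod n = k - n"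
    if "k < 2 * n" for k
    using that by (cases "k < n") (auto simp: le_div_geq le_mod_geq)
  show "kron_mat sign_diag_mat M $$ (i, j) = four_block_mat M (0\<^sub>m n n) (0\<^sub>m n n) ((-1) \<cdot>\<^sub>m M) $$ (i, j)"
    using halves[OF ij(1)] halves[OF ij(2)] ij M
    by (auto simp: index_kron_mat[of _ 2 2 M n n] sign_diag_mat_def mat_diag_def)
qed (use M in \<open>auto simp: sign_diag_mat_def mat_diag_def\<close>)

lemma jordan_nf_kron_neg_exchange_mat:
  fixes M :: "'a :: field_char_0 mat"
  assumes "jordan_nf M n_as" "M \<in> carrier_mat n n"
  shows "jordan_nf (kron_mat neg_exchange_mat M) (n_as @ map (\<lambda>(d, a). (d, -1 * a)) n_as)"
proof -
  have "jordan_nf (kron_mat sign_diag_mat M) (n_as @ map (\<lambda>(d, a). (d, -1 * a)) n_as)"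
    unfolding kron_mat_sign_diag_mat[OF assms(2)]
    using assms by (intro jordan_nf_four_block_0_0 jordan_nf_smult) auto
  moreover have "similar_mat (kron_mat neg_exchange_mat M) (kron_mat sign_diag_mat M)"
    using assms(2) by (intro similar_mat_kron_mat similar_mat_neg_exchange_mat similar_mat_refl)
  ultimately show ?thesis
    unfolding jordan_nf_def using similar_mat_trans by blast
qed

definition purely_competitive_realizable :: "(nat \<times> complex) list \<Rightarrow> bool" where
  "purely_competitive_realizable n_as \<longleftrightarrow> (\<exists>n B. B \<in> carrier_mat n n \<and> purely_competitive B \<and>
     jordan_nf (map_mat complex_of_real B) n_as)"

lemma purely_competitive_realizable_Nil: "purely_competitive_realizable []"
proof -
  have "map_mat complex_of_real (0\<^sub>m 0 0) = jordan_matrix []"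
    by (rule eq_matI) (auto simp: jordan_matrix_def)
  then have "jordan_nf (map_mat complex_of_real (0\<^sub>m 0 0)) []"
    unfolding jordan_nf_def by (auto intro!: similar_mat_refl[of _ 0])
  moreover have "purely_competitive (0\<^sub>m 0 0)"
    by (simp add: purely_competitive_def)
  ultimately show ?thesis
    unfolding purely_competitive_realizable_def by (intro exI[of _ 0] exI[of _ "0\<^sub>m 0 0"]) auto
qed

lemma purely_competitive_realizable_append:
  assumes "purely_competitive_realizable as" "purely_competitive_realizable bs"
  shows "purely_competitive_realizable (as @ bs)"
proof -
  obtain n A m B where
    A: "A \<in> carrier_mat n n" "purely_competitive A" "jordan_nf (map_mat complex_of_real A) as" and
    B: "B \<in> carrier_mat m m" "purely_competitive B" "jordan_nf (map_mat complex_of_real B) bs"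
    using assms unfolding purely_competitive_realizable_def by blast
  have "map_mat complex_of_real (four_block_mat A (0\<^sub>m n m) (0\<^sub>m m n) B) =
      four_block_mat (map_mat complex_of_real A) (0\<^sub>m n m) (0\<^sub>m m n) (map_mat complex_of_real B)"
    by (rule eq_matI) (use A(1) B(1) in auto)
  then have "jordan_nf (map_mat complex_of_real (four_block_mat A (0\<^sub>m n m) (0\<^sub>m m n) B)) (as @ bs)"
    using A B by (simp add: jordan_nf_four_block_0_0)
  moreover have "four_block_mat A (0\<^sub>m n m) (0\<^sub>m m n) B \<in> carrier_mat (n + m) (n + m)"
    using A(1) B(1) by auto
  ultimately show ?thesis
    unfolding purely_competitive_realizable_def
    using purely_competitive_four_block_0_0[OF A(2) B(2) A(1) B(1)] by blast
qed

lemma purely_competitive_realizable_jordan_block: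
  assumes "0 < d"
  shows "\<exists>n_as. purely_competitive_realizable n_as \<and> (d, c) \<in> set n_as"
proof -
  obtain x y z where xyz: "0 \<le> x" "0 \<le> y" "0 \<le> z"
    and c: "c = of_real x + of_real y * \<omega> + of_real z * \<omega>\<^sup>2"
    using nonneg_combination_omega by blast
  define M where "M = jordan_inflate (circulant3 x y z) d"
  let ?n_as = "map (\<lambda>k. (d, of_real x + of_real y * \<omega> ^ k + of_real z * \<omega> ^ (2 * k))) [0..<3]"
  have M: "M \<in> carrier_mat (3 * d) (3 * d)"
    unfolding M_def using carrier_matD[OF circulant3_carrier[of x y z]] by (intro carrier_matI) simp_all
  have "nonneg_mat M"
    unfolding M_def using xyz by (intro nonneg_mat_jordan_inflate[of _ 3] nonneg_mat_circulant3) auto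
  then have "purely_competitive (kron_mat neg_exchange_mat M)"
    using M by (rule purely_competitive_kron_mat[OF purely_competitive_neg_exchange_mat])
  moreover have "jordan_nf (map_mat complex_of_real M) ?n_as"
    unfolding M_def of_real_hom.mat_hom_jordan_inflate[OF circulant3_carrier] of_real_hom.mat_hom_circulant3
    using similar_mat_circulant3 assms by (rule jordan_nf_jordan_inflate)
  then have "jordan_nf (map_mat complex_of_real (kron_mat neg_exchange_mat M))
      (?n_as @ map (\<lambda>(d, a). (d, -1 * a)) ?n_as)"
    unfolding of_real_hom.mat_hom_kron_mat of_real_hom.mat_hom_neg_exchange_mat
    using M by (intro jordan_nf_kron_neg_exchange_mat) auto
  moreover have "kron_mat neg_exchange_mat M \<in> carrier_mat (2 * (3 * d)) (2 * (3 * d))"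
    using M by (auto simp: neg_exchange_mat_def)
  ultimately have "purely_competitive_realizable (?n_as @ map (\<lambda>(d, a). (d, -1 * a)) ?n_as)"
    unfolding purely_competitive_realizable_def by meson
  moreover have "(d, c) \<in> set ?n_as"
    unfolding set_map using c by (intro image_eqI[of _ _ 1]) auto
  ultimately show ?thesis
    by (intro exI[of _ "?n_as @ map (\<lambda>(d, a). (d, -1 * a)) ?n_as"]) auto
qed

lemma purely_competitive_realizable_supset:
  assumes "\<forall>(d, c) \<in> set blocks. 0 < d"
  shows "\<exists>n_as. purely_competitive_realizable n_as \<and> mset blocks \<subseteq># mset n_as"
  using assms
proof (induction blocks)
  case Nil
  show ?case using purely_competitive_realizable_Nil by auto
next
  case (Cons block blocks)
  obtain d c where block: "block = (d, c)" and "0 < d"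
    using Cons.prems by (cases block) auto
  obtain as where as: "purely_competitive_realizable as" "(d, c) \<in> set as"
    using purely_competitive_realizable_jordan_block[OF \<open>0 < d\<close>] by blast
  obtain bs where bs: "purely_competitive_realizable bs" "mset blocks \<subseteq># mset bs"
    using Cons by auto
  have "{#(d, c)#} + mset blocks \<subseteq># mset as + mset bs"
    using as(2) bs(2) by (intro subset_mset.add_mono) auto
  then show ?case
    using purely_competitive_realizable_append[OF as(1) bs(1)] block by auto
qed

theorem lemma9:
  fixes blocks :: "(nat \<times> complex) list"
  assumes "\<forall>(d, ev) \<in> set blocks. d \<ge> 1"
  shows "\<exists>n (B :: real mat). B \<in> carrier_mat n n \<and> purely_competitive B \<and>
           (\<exists>n_as. jordan_nf (map_mat complex_of_real B) n_as \<and> mset blocks \<subseteq># mset n_as)"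
proof -
  have "\<forall>(d, c) \<in> set blocks. 0 < d"
    using assms by auto
  then show ?thesis
    using purely_competitive_realizable_supset unfolding purely_competitive_realizable_def by blast
qed

end
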